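(* A snake graph $\mathcal{G}$ is palindromic of even length if and only if it has a rotational symmetry at its center tile.
   Context: A tile is a unit square in the plane with sides parallel to the coordinate axes, viewed as a graph with 4 vertices and 4 edges. A snake graph with $d\ge 1$ tiles is a planar graph which is the union of tiles $G_1,\dots,G_d$ such that for each $i$, $G_{i+1}$ is the translate of $G_i$ by $(0,1)$ or by $(1,0)$; thus $G_i$ and $G_{i+1}$ share exactly one edge $e_i$ (the north edge of $G_i$, or its east edge). Snake graphs are considered up to translation. A sign function on a snake graph is a map $f$ from its set of edges to $\{+,-\}$ such that in every tile the north and west edges have the same sign, the south and east edges have the same sign, and the north and south edges have opposite signs. For a sequence $(a_1,\dots,a_n)$ of positive integers with $d=a_1+\cdots+a_n-1\ge 1$, the snake graph $\mathcal{G}[a_1,\dots,a_n]$ is the unique snake graph with tiles $G_1,\dots,G_d$ for which there exist a sign function $f$ and an edge $e_d\in\{\text{north edge of }G_d,\ \text{east edge of }G_d\}$ such that, with $e_0$ the south edge of $G_1$ and $e_i$ ($1\le i\le d-1$) the edge shared by $G_i$ and $G_{i+1}$, the sequence $(f(e_0),f(e_1),\dots,f(e_d))$ consists of $a_1$ copies of a sign $s$, followed by $a_2$ copies of $-s$, then $a_3$ copies of $s$, and so on alternately. A snake graph $\mathcal{G}$ is called palindromic of even length if $\mathcal{G}=\mathcal{G}[a_1,\dots,a_n]$ for some sequence of positive integers with $n$ even and $(a_1,\dots,a_n)=(a_n,\dots,a_1)$. A snake graph has a rotational symmetry at its center tile if it has a tile $G_i$ such that the rotation by $180^\circ$ about the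 center of $G_i$ maps the graph onto itself. *)

theory Defs
  imports Main
begin

(* A snake graph with d tiles, up to translation, is encoded by its list of
   d-1 steps: True = next tile is the translate by (0,1) (north),
   False = translate by (1,0) (east).  Tile i (0-indexed, i < d) has lower-left
   corner tile_pos s i, with tile 0 at the origin. *)

type_synonym point = "int \<times> int"
type_synonym edge = "point set"

fun tile_pos :: "bool list \<Rightarrow> nat \<Rightarrow> point" where
  "tile_pos s 0 = (0, 0)"
| "tile_pos s (Suc i) =
     (case tile_pos s i of (x, y) \<Rightarrow> if s ! i then (x, y + 1) else (x + 1, y))"

definition num_tiles :: "bool list \<Rightarrow> nat" where
  "num_tiles s = length s + 1"

definition south_edge :: "point \<Rightarrow> edge" where
  "south_edge p = (case p of (x, y) \<Rightarrow> {(x, y), (x + 1, y)})"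
definition north_edge :: "point \<Rightarrow> edge" where
  "north_edge p = (case p of (x, y) \<Rightarrow> {(x, y + 1), (x + 1, y + 1)})"
definition west_edge :: "point \<Rightarrow> edge" where
  "west_edge p = (case p of (x, y) \<Rightarrow> {(x, y), (x, y + 1)})"
definition east_edge :: "point \<Rightarrow> edge" where
  "east_edge p = (case p of (x, y) \<Rightarrow> {(x + 1, y), (x + 1, y + 1)})"

definition tile_vertices :: "point \<Rightarrow> point set" where
  "tile_vertices p = (case p of (x, y) \<Rightarrow> {(x, y), (x + 1, y), (x, y + 1), (x + 1, y + 1)})"
definition tile_edges :: "point \<Rightarrow> edge set" where
  "tile_edges p = {south_edge p, north_edge p, west_edge p, east_edge p}"

definition snake_vertices :: "bool list \<Rightarrow> point set" where
  "snake_vertices s = (\<Union>i<num_tiles s. tile_vertices (tile_pos s i))"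
definition snake_edges :: "bool list \<Rightarrow> edge set" where
  "snake_edges s = (\<Union>i<num_tiles s. tile_edges (tile_pos s i))"

(* rotation by 180 degrees about the center of the tile with lower-left corner c *)
definition rot180 :: "point \<Rightarrow> point \<Rightarrow> point" where
  "rot180 c q = (case c of (x, y) \<Rightarrow> case q of (u, v) \<Rightarrow> (2 * x + 1 - u, 2 * y + 1 - v))"

definition rot_symmetric_at_tile :: "bool list \<Rightarrow> bool" where
  "rot_symmetric_at_tile s \<longleftrightarrow>
     (\<exists>i<num_tiles s.
        rot180 (tile_pos s i) ` snake_vertices s = snake_vertices s \<and>
        (\<lambda>e. rot180 (tile_pos s i) ` e) ` snake_edges s = snake_edges s)"

(* sign function: signs + / - encoded as True / False *)
definition sign_function :: "bool list \<Rightarrow> (edge \<Rightarrow> bool) \<Rightarrow> bool" where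
  "sign_function s f \<longleftrightarrow>
     (\<forall>i<num_tiles s. let p = tile_pos s i in
        f (north_edge p) = f (west_edge p) \<and>
        f (south_edge p) = f (east_edge p) \<and>
        f (north_edge p) \<noteq> f (south_edge p))"

(* the edge e_{i+1} shared by tiles i and i+1 (0-indexed) *)
definition inner_edge :: "bool list \<Rightarrow> nat \<Rightarrow> edge" where
  "inner_edge s i = (if s ! i then north_edge (tile_pos s i) else east_edge (tile_pos s i))"

fun alt_seq :: "bool \<Rightarrow> nat list \<Rightarrow> bool list" where
  "alt_seq b [] = []"
| "alt_seq b (x # xs) = replicate x b @ alt_seq (\<not> b) xs"

definition is_snake_of_seq :: "bool list \<Rightarrow> nat list \<Rightarrow> bool" where
  "is_snake_of_seq s a \<longleftrightarrow>
     (\<forall>x\<in>set a. x > 0) \<and> int (num_tiles s) = int (sum_list a) - 1 \<and>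
     (\<exists>f ed b. sign_function s f \<and>
        ed \<in> {north_edge (tile_pos s (num_tiles s - 1)), east_edge (tile_pos s (num_tiles s - 1))} \<and>
        [f (south_edge (tile_pos s 0))] @ map (\<lambda>i. f (inner_edge s i)) [0..<length s] @ [f ed]
          = alt_seq b a)"

definition palindromic_even :: "bool list \<Rightarrow> bool" where
  "palindromic_even s \<longleftrightarrow>
     (\<exists>a. (\<forall>x\<in>set a. x > 0) \<and> even (length a) \<and> rev a = a \<and> is_snake_of_seq s a)"

end

(*
  Both conditions amount to the step word s (True = north step) being a palindrome of even
  length.

  The rotation by 180 degrees about a tile maps the snake with steps s to the snake with
  steps rev s that starts at the image of the last tile. The vertex set of a snake determines
  its first tile (the componentwise minimum) and then, step by step, its steps. Hence the
  rotation about tile i is a symmetry iff rev s = s and it swaps the first and the last tile;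
  as the coordinates of tile i add up to i, the latter forces length s = 2 i.

  Along a snake, a sign function gives the north edges among e_0, ..., e_d (e_0 counting as
  one) alternating signs and the east edges the opposite of that alternating pattern. So the
  sign word is antipalindromic (its reverse is its negation) iff the word True # s @ [t] is a
  palindrome of even length, where t says whether e_d is a north edge. Finally, a word is
  antipalindromic iff its run lengths form a palindrome of even length.
*)

theory Submission
  imports Defs
begin

section \<open>Snakes with an arbitrary first tile\<close>

definition next_tile :: "point \<Rightarrow> bool \<Rightarrow> point" where
  "next_tile q b = (case q of (x, y) \<Rightarrow> if b then (x, y + 1) else (x + 1, y))"

fun tile_from :: "point \<Rightarrow> bool list \<Rightarrow> nat \<Rightarrow> point" where
  "tile_from p s 0 = p"
| "tile_from p s (Suc i) = next_tile (tile_from p s i) (s ! i)"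

definition snake_vertices_from :: "point \<Rightarrow> bool list \<Rightarrow> point set" where
  "snake_vertices_from p s = (\<Union>i\<le>length s. tile_vertices (tile_from p s i))"

definition snake_edges_from :: "point \<Rightarrow> bool list \<Rightarrow> edge set" where
  "snake_edges_from p s = (\<Union>i\<le>length s. tile_edges (tile_from p s i))"

lemma tile_pos_eq_tile_from: "tile_pos s i = tile_from (0, 0) s i"
  by (induction i) (auto simp: next_tile_def)

lemma snake_vertices_eq: "snake_vertices s = snake_vertices_from (0, 0) s"
  by (simp add: snake_vertices_def snake_vertices_from_def num_tiles_def tile_pos_eq_tile_from
      lessThan_Suc_atMost)

lemma snake_edges_eq: "snake_edges s = snake_edges_from (0, 0) s"
  by (simp add: snake_edges_def snake_edges_from_def num_tiles_def tile_pos_eq_tile_from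
      lessThan_Suc_atMost)

lemma tile_from_Cons_Suc: "tile_from p (b # s) (Suc i) = tile_from (next_tile p b) s i"
  by (induction i) auto

lemma tile_from_translate:
  "tile_from (a, b) s i = (a + fst (tile_from (0, 0) s i), b + snd (tile_from (0, 0) s i))"
  by (induction i) (auto simp: next_tile_def split: prod.splits)

lemma tile_from_coordinate_sum: "fst (tile_from p s i) + snd (tile_from p s i) = fst p + snd p + int i"
  by (induction i) (auto simp: next_tile_def split: prod.splits)

lemma snake_vertices_from_Nil: "snake_vertices_from p [] = tile_vertices p"
  by (simp add: snake_vertices_from_def)

lemma snake_vertices_from_Cons:
  "snake_vertices_from p (b # s) = tile_vertices p \<union> snake_vertices_from (next_tile p b) s"
  unfolding snake_vertices_from_def length_Cons atMost_Suc_eq_insert_0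
  by (simp add: image_image tile_from_Cons_Suc del: tile_from.simps(2))

lemma tile_from_lower_bound: "fst p \<le> fst (tile_from p s i) \<and> snd p \<le> snd (tile_from p s i)"
  by (induction i) (auto simp: next_tile_def split: prod.splits)

lemma snake_vertices_from_lower_bound:
  "w \<in> snake_vertices_from p s \<Longrightarrow> fst p \<le> fst w \<and> snd p \<le> snd w"
proof -
  assume "w \<in> snake_vertices_from p s"
  then obtain i where "w \<in> tile_vertices (tile_from p s i)"
    by (auto simp: snake_vertices_from_def)
  then show ?thesis
    using tile_from_lower_bound[of p s i]
    by (cases "tile_from p s i") (auto simp: tile_vertices_def)
qed

lemma tile_vertices_subset_snake_vertices_from: "tile_vertices p \<subseteq> snake_vertices_from p s"
  unfolding snake_vertices_from_def by (metis UN_upper atMost_iff tile_from.simps(1) zero_le)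

lemma start_mem_snake_vertices_from: "p \<in> snake_vertices_from p s"
  using tile_vertices_subset_snake_vertices_from[of p s]
  by (auto simp: tile_vertices_def split: prod.splits)

lemma snake_vertices_from_determine_start:
  assumes "snake_vertices_from p s = snake_vertices_from q t"
  shows "p = q"
  using snake_vertices_from_lower_bound[of p q t] snake_vertices_from_lower_bound[of q p s]
    start_mem_snake_vertices_from[of p s] start_mem_snake_vertices_from[of q t] assms
  by (simp add: prod_eq_iff)

lemma snake_vertices_from_Cons_above_next_tile:
  "snake_vertices_from p (d # r) \<inter> {w. fst (next_tile p d) \<le> fst w \<and> snd (next_tile p d) \<le> snd w}
     = snake_vertices_from (next_tile p d) r"
  using snake_vertices_from_lower_bound[of _ "next_tile p d" r]
    tile_vertices_subset_snake_vertices_from[of "next_tile p d" r]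
  by (auto simp: snake_vertices_from_Cons next_tile_def tile_vertices_def split: prod.splits if_splits)

lemma snake_vertices_from_east_corner:
  "(a + 2, b) \<in> snake_vertices_from (a, b) s \<longleftrightarrow> (\<exists>r. s = False # r)"
proof (cases s)
  case (Cons d r)
  then show ?thesis
    using snake_vertices_from_lower_bound[of "(a + 2, b)" "(a, b + 1)" r]
      tile_vertices_subset_snake_vertices_from[of "(a + 1, b)" r]
    by (cases d) (auto simp: snake_vertices_from_Cons next_tile_def tile_vertices_def algebra_simps)
qed (simp add: snake_vertices_from_Nil tile_vertices_def)

lemma snake_vertices_from_north_corner:
  "(a, b + 2) \<in> snake_vertices_from (a, b) s \<longleftrightarrow> (\<exists>r. s = True # r)"
proof (cases s)
  case (Cons d r)
  then show ?thesis
    using snake_vertices_from_lower_bound[of "(a, b + 2)" "(a + 1, b)" r]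
      tile_vertices_subset_snake_vertices_from[of "(a, b + 1)" r]
    by (cases d) (auto simp: snake_vertices_from_Cons next_tile_def tile_vertices_def algebra_simps)
qed (simp add: snake_vertices_from_Nil tile_vertices_def)

lemma snake_vertices_from_determine_first_step:
  assumes "snake_vertices_from p s = snake_vertices_from p t"
  shows "(\<exists>r. s = False # r) \<longleftrightarrow> (\<exists>r. t = False # r)"
    and "(\<exists>r. s = True # r) \<longleftrightarrow> (\<exists>r. t = True # r)"
  using assms snake_vertices_from_east_corner[of "fst p" "snd p"]
    snake_vertices_from_north_corner[of "fst p" "snd p"]
  by (metis prod.collapse)+

lemma snake_vertices_from_determine_steps:
  "snake_vertices_from p s = snake_vertices_from p t \<Longrightarrow> s = t"
proof (induction s arbitrary: p t)
  case Nil
  then show ?case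
    using snake_vertices_from_determine_first_step[OF Nil] by (metis (full_types) neq_Nil_conv)
next
  case (Cons d s)
  obtain r where t: "t = d # r"
    using snake_vertices_from_determine_first_step[OF Cons.prems] by (cases d) auto
  have "snake_vertices_from (next_tile p d) s = snake_vertices_from (next_tile p d) r"
    using Cons.prems snake_vertices_from_Cons_above_next_tile[of p d] unfolding t by metis
  then show ?case using Cons.IH t by blast
qed

lemma snake_vertices_from_inject:
  "snake_vertices_from p s = snake_vertices_from q t \<Longrightarrow> p = q \<and> s = t"
  using snake_vertices_from_determine_start snake_vertices_from_determine_steps by blast

section \<open>Rotation by 180 degrees\<close>

definition rot180_tile :: "point \<Rightarrow> point \<Rightarrow> point" where
  "rot180_tile c q = (case c of (x, y) \<Rightarrow> case q of (u, v) \<Rightarrow> (2 * x - u, 2 * y - v))"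

lemma rot180_tile_vertices: "rot180 c ` tile_vertices q = tile_vertices (rot180_tile c q)"
  by (cases c; cases q) (auto simp: rot180_def rot180_tile_def tile_vertices_def algebra_simps)

lemma rot180_tile_edges: "(\<lambda>e. rot180 c ` e) ` tile_edges q = tile_edges (rot180_tile c q)"
proof -
  obtain x y u v where "c = (x, y)" "q = (u, v)" by fastforce
  then have "rot180 c ` south_edge q = north_edge (rot180_tile c q)"
    and "rot180 c ` north_edge q = south_edge (rot180_tile c q)"
    and "rot180 c ` west_edge q = east_edge (rot180_tile c q)"
    and "rot180 c ` east_edge q = west_edge (rot180_tile c q)"
    by (auto simp: rot180_def rot180_tile_def south_edge_def north_edge_def west_edge_def
        east_edge_def algebra_simps)
  then show ?thesis by (auto simp: tile_edges_def)
qed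

lemma next_tile_rot180_tile: "next_tile (rot180_tile c (next_tile q d)) d = rot180_tile c q"
  by (cases c; cases q) (auto simp: next_tile_def rot180_tile_def)

lemma tile_from_rev:
  assumes "j \<le> length s"
  shows "tile_from (rot180_tile c (tile_from p s (length s))) (rev s) j
       = rot180_tile c (tile_from p s (length s - j))"
  using assms
proof (induction j)
  case (Suc j)
  then have "j < length s" and "length s - j = Suc (length s - Suc j)" by simp_all
  with Suc show ?case by (simp add: rev_nth next_tile_rot180_tile)
qed simp

lemma UN_atMost_reverse: "(\<Union>j\<le>n. F (n - j)) = (\<Union>i\<le>n::nat. F i)"
proof -
  have "(\<lambda>j. n - j) ` {..n} = {..n}"
  proof (intro equalityI subsetI)
    fix i assume "i \<in> {..n}"
    then have "i = n - (n - i)" and "n - i \<in> {..n}" by auto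
    then show "i \<in> (\<lambda>j. n - j) ` {..n}" by (rule image_eqI)
  qed auto
  then show ?thesis by (metis image_image)
qed

lemma rot180_snake_vertices_from:
  "rot180 c ` snake_vertices_from p s
     = snake_vertices_from (rot180_tile c (tile_from p s (length s))) (rev s)"
proof -
  have "rot180 c ` snake_vertices_from p s
      = (\<Union>j\<le>length s. tile_vertices (rot180_tile c (tile_from p s (length s - j))))"
    by (simp add: snake_vertices_from_def image_UN rot180_tile_vertices
        UN_atMost_reverse[where F = "\<lambda>i. tile_vertices (rot180_tile c (tile_from p s i))"])
  then show ?thesis by (simp add: snake_vertices_from_def tile_from_rev)
qed

lemma rot180_snake_edges_from:
  "(\<lambda>e. rot180 c ` e) ` snake_edges_from p s
     = snake_edges_from (rot180_tile c (tile_from p s (length s))) (rev s)"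
proof -
  have "(\<lambda>e. rot180 c ` e) ` snake_edges_from p s
      = (\<Union>j\<le>length s. tile_edges (rot180_tile c (tile_from p s (length s - j))))"
    by (simp add: snake_edges_from_def image_UN rot180_tile_edges
        UN_atMost_reverse[where F = "\<lambda>i. tile_edges (rot180_tile c (tile_from p s i))"])
  then show ?thesis by (simp add: snake_edges_from_def tile_from_rev)
qed

lemma palindrome_tile_pos_add:
  assumes "rev s = s" and "j \<le> length s"
  shows "fst (tile_pos s j) + fst (tile_pos s (length s - j)) = fst (tile_pos s (length s))"
    and "snd (tile_pos s j) + snd (tile_pos s (length s - j)) = snd (tile_pos s (length s))"
proof -
  obtain X Y where E: "tile_pos s (length s) = (X, Y)" by fastforce
  have "tile_from (- X, - Y) s j = rot180_tile (0, 0) (tile_pos s (length s - j))"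
    using tile_from_rev[OF assms(2), of "(0, 0)" "(0, 0)"] assms(1) E
    by (simp add: tile_pos_eq_tile_from rot180_tile_def)
  then show "fst (tile_pos s j) + fst (tile_pos s (length s - j)) = fst (tile_pos s (length s))"
    and "snd (tile_pos s j) + snd (tile_pos s (length s - j)) = snd (tile_pos s (length s))"
    using E tile_from_translate[of "- X" "- Y" s j]
    by (auto simp: tile_pos_eq_tile_from rot180_tile_def split: prod.splits)
qed

lemma rot180_snake_vertices_eq_iff:
  "rot180 c ` snake_vertices s = snake_vertices s
     \<longleftrightarrow> rot180_tile c (tile_pos s (length s)) = (0, 0) \<and> rev s = s"
  using snake_vertices_from_inject[of "rot180_tile c (tile_pos s (length s))" "rev s" "(0, 0)" s]
  by (auto simp: snake_vertices_eq rot180_snake_vertices_from tile_pos_eq_tile_from)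

lemma rot180_snake_edges_eq:
  "rot180_tile c (tile_pos s (length s)) = (0, 0) \<Longrightarrow> rev s = s
     \<Longrightarrow> (\<lambda>e. rot180 c ` e) ` snake_edges s = snake_edges s"
  by (simp add: snake_edges_eq rot180_snake_edges_from tile_pos_eq_tile_from)

lemma tile_pos_coordinate_sum: "fst (tile_pos s i) + snd (tile_pos s i) = int i"
  using tile_from_coordinate_sum[of "(0, 0)" s i] by (simp add: tile_pos_eq_tile_from)

lemma rot_symmetric_at_tile_iff: "rot_symmetric_at_tile s \<longleftrightarrow> even (length s) \<and> rev s = s"
proof
  assume "rot_symmetric_at_tile s"
  then obtain i where "rot180 (tile_pos s i) ` snake_vertices s = snake_vertices s"
    unfolding rot_symmetric_at_tile_def by blast
  then have "rot180_tile (tile_pos s i) (tile_pos s (length s)) = (0, 0)" and "rev s = s"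
    by (simp_all add: rot180_snake_vertices_eq_iff)
  then have "int (length s) = 2 * int i"
    using tile_pos_coordinate_sum[of s i] tile_pos_coordinate_sum[of s "length s"]
    by (auto simp: rot180_tile_def split: prod.splits)
  then show "even (length s) \<and> rev s = s" using \<open>rev s = s\<close> by presburger
next
  assume "even (length s) \<and> rev s = s"
  moreover define h where "h = length s div 2"
  ultimately have "h < num_tiles s" and "length s - h = h" and "rev s = s"
    by (auto simp: num_tiles_def)
  then have "rot180_tile (tile_pos s h) (tile_pos s (length s)) = (0, 0)"
    using palindrome_tile_pos_add[of s h]
    by (auto simp: rot180_tile_def split: prod.splits)
  then show "rot_symmetric_at_tile s"
    unfolding rot_symmetric_at_tile_def
    using \<open>h < num_tiles s\<close> \<open>rev s = s\<close> rot180_snake_vertices_eq_iff rot180_snake_edges_eq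
    by blast
qed

section \<open>Sign sequences\<close>

lemma south_edge_next_tile_north:
  "s ! i \<Longrightarrow> south_edge (tile_pos s (Suc i)) = north_edge (tile_pos s i)"
  by (cases "tile_pos s i") (simp add: south_edge_def north_edge_def)

lemma west_edge_next_tile_east:
  "\<not> s ! i \<Longrightarrow> west_edge (tile_pos s (Suc i)) = east_edge (tile_pos s i)"
  by (cases "tile_pos s i") (simp add: west_edge_def east_edge_def)

lemma north_edge_neq_east_edge: "north_edge p \<noteq> east_edge p"
  by (cases p) (auto simp: north_edge_def east_edge_def doubleton_eq_iff)

lemma sign_function_tileD:
  assumes "sign_function s f" and "i < num_tiles s"
  shows "f (north_edge (tile_pos s i)) = (\<not> f (south_edge (tile_pos s i)))"
    and "f (west_edge (tile_pos s i)) = (\<not> f (south_edge (tile_pos s i)))"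
    and "f (east_edge (tile_pos s i)) = f (south_edge (tile_pos s i))"
  using assms unfolding sign_function_def Let_def by metis+

lemma sign_function_south_edge:
  assumes f: "sign_function s f" and "i < num_tiles s"
  shows "f (south_edge (tile_pos s i)) = (f (south_edge (tile_pos s 0)) \<noteq> odd i)"
  using assms(2)
proof (induction i)
  case (Suc i)
  then have "i < num_tiles s" by simp
  have "f (south_edge (tile_pos s (Suc i))) = (\<not> f (south_edge (tile_pos s i)))"
  proof (cases "s ! i")
    case True
    then show ?thesis
      using south_edge_next_tile_north sign_function_tileD[OF f \<open>i < num_tiles s\<close>] by metis
  next
    case False
    then show ?thesis
      using west_edge_next_tile_east sign_function_tileD[OF f] Suc.prems \<open>i < num_tiles s\<close>
      by metis
  qed
  then show ?case using Suc \<open>i < num_tiles s\<close> by simp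
qed simp

text \<open>If u ! k records whether e_k is a north edge (e_0 counts as one), a sign function
  with sign \<sigma> on e_0 gives e_k the sign signs_along \<sigma> u ! k.\<close>

definition signs_along :: "bool \<Rightarrow> bool list \<Rightarrow> bool list" where
  "signs_along \<sigma> u = map (\<lambda>k. (\<sigma> = odd k) \<noteq> u ! k) [0..<length u]"

lemma sign_sequence_eq_signs_along:
  assumes f: "sign_function s f"
    and ed: "ed \<in> {north_edge (tile_pos s (num_tiles s - 1)), east_edge (tile_pos s (num_tiles s - 1))}"
  defines "\<sigma> \<equiv> f (south_edge (tile_pos s 0))"
  shows "[\<sigma>] @ map (\<lambda>i. f (inner_edge s i)) [0..<length s] @ [f ed]
       = signs_along \<sigma> (True # s @ [ed = north_edge (tile_pos s (num_tiles s - 1))])"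
    (is "?signs = signs_along \<sigma> ?u")
proof (rule nth_equalityI)
  show "length ?signs = length (signs_along \<sigma> ?u)" by (simp add: signs_along_def)
next
  fix k assume "k < length ?signs"
  then have signs_along_k: "signs_along \<sigma> ?u ! k = ((\<sigma> = odd k) \<noteq> ?u ! k)"
    by (simp add: signs_along_def del: upt_Suc)
  have north: "f (north_edge (tile_pos s i)) = (\<sigma> = odd i)"
    and east: "f (east_edge (tile_pos s i)) = (\<sigma> \<noteq> odd i)" if "i < num_tiles s" for i
    using sign_function_tileD[OF f that] sign_function_south_edge[OF f that] \<sigma>_def by auto
  consider "k = 0" | i where "k = Suc i" "i < length s" | "k = Suc (length s)"
    using \<open>k < length ?signs\<close> by (cases k) (auto simp: less_Suc_eq)
  then show "?signs ! k = signs_along \<sigma> ?u ! k"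
  proof cases
    case 1
    then show ?thesis using signs_along_k by simp
  next
    case 2
    then show ?thesis
      using signs_along_k north[of i] east[of i]
      by (auto simp: inner_edge_def nth_append num_tiles_def)
  next
    case 3
    have "num_tiles s - 1 = length s" and "length s < num_tiles s" by (simp_all add: num_tiles_def)
    then show ?thesis
      using 3 signs_along_k ed north[of "length s"] east[of "length s"] north_edge_neq_east_edge
      by (auto simp: nth_append)
  qed
qed

lemma rev_eq_map_Not_iff:
  "rev xs = map Not xs \<longleftrightarrow> (\<forall>k<length xs. xs ! (length xs - Suc k) = (\<not> xs ! k))"
  by (auto simp: list_eq_iff_nth_eq rev_nth)

lemma length_signs_along: "length (signs_along \<sigma> u) = length u"
  by (simp add: signs_along_def)

lemma antipalindromic_signs_along_iff:
  "rev (signs_along \<sigma> u) = map Not (signs_along \<sigma> u) \<longleftrightarrow> even (length u) \<and> rev u = u"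
proof -
  define n where "n = length u"
  have "rev (signs_along \<sigma> u) = map Not (signs_along \<sigma> u)
      \<longleftrightarrow> (\<forall>k<n. signs_along \<sigma> u ! (n - Suc k) = (\<not> signs_along \<sigma> u ! k))"
    unfolding rev_eq_map_Not_iff length_signs_along n_def ..
  also have "\<dots> \<longleftrightarrow> (\<forall>k<n. u ! (n - Suc k) = (u ! k \<noteq> odd n))"
  proof -
    have signs_along_nth: "signs_along \<sigma> u ! k = ((\<sigma> = odd k) \<noteq> u ! k)" if "k < n" for k
      using that by (simp add: signs_along_def n_def)
    have "signs_along \<sigma> u ! (n - Suc k) = (\<not> signs_along \<sigma> u ! k)
        \<longleftrightarrow> u ! (n - Suc k) = (u ! k \<noteq> odd n)" if "k < n" for k
    proof -
      have "odd (n - Suc k) = (odd n = odd k)"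
        using that by simp
      then show ?thesis
        using that signs_along_nth[of k] signs_along_nth[of "n - Suc k"] by auto
    qed
    then show ?thesis by auto
  qed
  also have "\<dots> \<longleftrightarrow> even n \<and> rev u = u"
  proof (cases "even n")
    case True
    then show ?thesis by (auto simp: list_eq_iff_nth_eq rev_nth n_def)
  next
    case False
    then have "n div 2 < n" and "n - Suc (n div 2) = n div 2" by (auto elim: oddE)
    then show ?thesis using False by (metis (full_types))
  qed
  finally show ?thesis by (simp add: n_def)
qed

section \<open>Run-length encodings\<close>

lemma length_alt_seq: "length (alt_seq b a) = sum_list a"
  by (induction a arbitrary: b) auto

lemma alt_seq_snoc:
  "alt_seq b (a @ [x]) = alt_seq b a @ replicate x (if even (length a) then b else \<not> b)"
  by (induction a arbitrary: b) auto

lemma rev_alt_seq: "rev (alt_seq b a) = alt_seq (if even (length a) then \<not> b else b) (rev a)"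
  by (induction a rule: rev_induct) (auto simp: alt_seq_snoc)

lemma map_Not_alt_seq: "map Not (alt_seq b a) = alt_seq (\<not> b) a"
  by (induction a arbitrary: b) auto

lemma hd_alt_seq:
  "\<forall>x\<in>set a. 0 < x \<Longrightarrow> a \<noteq> [] \<Longrightarrow> alt_seq b a \<noteq> [] \<and> hd (alt_seq b a) = b"
  by (cases a) (auto simp: hd_append)

lemma replicate_append_inject:
  "l = [] \<or> hd l \<noteq> b \<Longrightarrow> l' = [] \<or> hd l' \<noteq> b \<Longrightarrow> replicate x b @ l = replicate y b @ l'
     \<Longrightarrow> x = y \<and> l = l'"
  by (induction x arbitrary: y; case_tac y) auto

lemma alt_seq_inject:
  "\<forall>x\<in>set a. 0 < x \<Longrightarrow> \<forall>x\<in>set a'. 0 < x \<Longrightarrow> a \<noteq> [] \<Longrightarrow> alt_seq b a = alt_seq b' a'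
     \<Longrightarrow> b = b' \<and> a = a'"
proof (induction a arbitrary: b a' b')
  case Nil
  then show ?case by simp
next
  case (Cons x a)
  obtain y a'' where a': "a' = y # a''"
    using Cons.prems(1,4) by (cases a') auto
  then have "b = b'"
    using hd_alt_seq[OF Cons.prems(1), of b] hd_alt_seq[OF Cons.prems(2), of b'] Cons.prems(4)
    by auto
  have rest: "alt_seq (\<not> b) c = [] \<or> hd (alt_seq (\<not> b) c) \<noteq> b" if "\<forall>x\<in>set c. 0 < x" for c
    using hd_alt_seq[of c "\<not> b"] that by (cases "c = []") auto
  have runs: "replicate x b @ alt_seq (\<not> b) a = replicate y b @ alt_seq (\<not> b) a''"
    using Cons.prems(4) a' \<open>b = b'\<close> by simp
  have pos: "\<forall>x\<in>set a. 0 < x" "\<forall>x\<in>set a''. 0 < x"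
    using Cons.prems(1,2) a' by simp_all
  have "x = y" and tail: "alt_seq (\<not> b) a = alt_seq (\<not> b) a''"
    using replicate_append_inject[OF rest[OF pos(1)] rest[OF pos(2)] runs] by simp_all
  have "a = a''"
  proof (cases "a = []")
    case True
    then show ?thesis using tail hd_alt_seq[OF pos(2), of "\<not> b"] by auto
  next
    case False
    then show ?thesis using Cons.IH[OF pos(1) pos(2) False tail] by simp
  qed
  then show ?case using \<open>b = b'\<close> \<open>x = y\<close> a' by blast
qed

lemma alt_seq_surj: "\<exists>a b. (\<forall>x\<in>set a. 0 < x) \<and> alt_seq b a = c"
proof (induction c)
  case Nil
  show ?case by (intro exI[of _ "[]"] exI[of _ True]) simp
next
  case (Cons y c)
  then obtain a b where pos: "\<forall>x\<in>set a. 0 < x" and c: "alt_seq b a = c" by blast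
  consider "a = []" | z r where "a = z # r" "b = y" | "a \<noteq> []" "b = (\<not> y)"
    by (cases a) auto
  then show ?case
  proof cases
    case 1
    then show ?thesis using c by (intro exI[of _ "[1]"] exI[of _ y]) simp
  next
    case 2
    then have "alt_seq y (Suc z # r) = y # c" and "\<forall>x\<in>set (Suc z # r). 0 < x"
      using c pos by auto
    then show ?thesis by blast
  next
    case 3
    then have "alt_seq y (1 # a) = y # c" and "\<forall>x\<in>set (1 # a). 0 < x"
      using c pos by auto
    then show ?thesis by blast
  qed
qed

lemma antipalindromic_iff_alt_seq_even_palindrome:
  assumes "c \<noteq> []"
  shows "rev c = map Not c
    \<longleftrightarrow> (\<exists>a b. (\<forall>x\<in>set a. 0 < x) \<and> even (length a) \<and> rev a = a \<and> alt_seq b a = c)"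
proof
  assume antipal: "rev c = map Not c"
  obtain a b where pos: "\<forall>x\<in>set a. 0 < x" and c: "alt_seq b a = c"
    using alt_seq_surj by blast
  with assms have "a \<noteq> []" by auto
  have "alt_seq (if even (length a) then \<not> b else b) (rev a) = alt_seq (\<not> b) a"
    using antipal c rev_alt_seq[of b a] map_Not_alt_seq[of b a] by simp
  then have "(if even (length a) then \<not> b else b) = (\<not> b)" and "rev a = a"
    using alt_seq_inject[of "rev a" a] pos \<open>a \<noteq> []\<close> by auto
  then show "\<exists>a b. (\<forall>x\<in>set a. 0 < x) \<and> even (length a) \<and> rev a = a \<and> alt_seq b a = c"
    using pos c by (metis (full_types))
next
  assume "\<exists>a b. (\<forall>x\<in>set a. 0 < x) \<and> even (length a) \<and> rev a = a \<and> alt_seq b a = c"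
  then obtain a b where "even (length a)" "rev a = a" "alt_seq b a = c" by blast
  then show "rev c = map Not c" using rev_alt_seq[of b a] map_Not_alt_seq[of b a] by simp
qed

section \<open>Palindromic snake graphs\<close>

definition checkerboard_sign :: "edge \<Rightarrow> bool" where
  "checkerboard_sign e \<longleftrightarrow>
     (\<exists>a b. e = south_edge (a, b) \<and> odd (a + b)) \<or> (\<exists>a b. e = west_edge (a, b) \<and> even (a + b))"

lemma checkerboard_sign_south_edge: "checkerboard_sign (south_edge (a, b)) \<longleftrightarrow> odd (a + b)"
  and checkerboard_sign_west_edge: "checkerboard_sign (west_edge (a, b)) \<longleftrightarrow> even (a + b)"
  by (auto simp: checkerboard_sign_def south_edge_def west_edge_def doubleton_eq_iff)

lemma sign_function_checkerboard_sign: "sign_function s checkerboard_sign"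
proof -
  have "checkerboard_sign (north_edge p) = checkerboard_sign (west_edge p) \<and>
      checkerboard_sign (south_edge p) = checkerboard_sign (east_edge p) \<and>
      checkerboard_sign (north_edge p) \<noteq> checkerboard_sign (south_edge p)" for p
  proof -
    obtain a b where p: "p = (a, b)" by fastforce
    have "north_edge p = south_edge (a, b + 1)" and "east_edge p = west_edge (a + 1, b)"
      by (simp_all add: p north_edge_def south_edge_def east_edge_def west_edge_def)
    then show ?thesis
      by (simp add: p checkerboard_sign_south_edge checkerboard_sign_west_edge algebra_simps)
  qed
  then show ?thesis unfolding sign_function_def Let_def by blast
qed

lemma palindromic_even_iff: "palindromic_even s \<longleftrightarrow> even (length s) \<and> rev s = s"
proof
  assume "palindromic_even s"
  then obtain a f ed b where pos: "\<forall>x\<in>set a. 0 < x" and a: "even (length a)" "rev a = a"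
    and f: "sign_function s f"
    and ed: "ed \<in> {north_edge (tile_pos s (num_tiles s - 1)), east_edge (tile_pos s (num_tiles s - 1))}"
    and signs: "[f (south_edge (tile_pos s 0))] @ map (\<lambda>i. f (inner_edge s i)) [0..<length s] @ [f ed]
      = alt_seq b a"
    unfolding palindromic_even_def is_snake_of_seq_def by blast
  define u where "u = True # s @ [ed = north_edge (tile_pos s (num_tiles s - 1))]"
  define c where "c = signs_along (f (south_edge (tile_pos s 0))) u"
  have "c = alt_seq b a"
    using sign_sequence_eq_signs_along[OF f ed] signs by (simp add: c_def u_def)
  moreover have "c \<noteq> []" by (simp add: c_def u_def signs_along_def)
  ultimately have "rev c = map Not c"
    using antipalindromic_iff_alt_seq_even_palindrome pos a by blast
  then have "even (length u) \<and> rev u = u"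
    unfolding c_def antipalindromic_signs_along_iff .
  then show "even (length s) \<and> rev s = s" by (simp add: u_def)
next
  assume s: "even (length s) \<and> rev s = s"
  define ed where "ed = north_edge (tile_pos s (num_tiles s - 1))"
  define c where "c = signs_along (checkerboard_sign (south_edge (tile_pos s 0))) (True # s @ [True])"
  have signs: "[checkerboard_sign (south_edge (tile_pos s 0))]
      @ map (\<lambda>i. checkerboard_sign (inner_edge s i)) [0..<length s] @ [checkerboard_sign ed] = c"
    using sign_sequence_eq_signs_along[OF sign_function_checkerboard_sign, of ed s]
    by (simp add: ed_def c_def)
  have "length c = length s + 2" by (simp add: c_def length_signs_along)
  have "rev c = map Not c"
    unfolding c_def antipalindromic_signs_along_iff using s by simp
  moreover have "c \<noteq> []" using \<open>length c = length s + 2\<close> by auto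
  ultimately obtain a b where pos: "\<forall>x\<in>set a. 0 < x" and a: "even (length a)" "rev a = a"
    and "alt_seq b a = c"
    using antipalindromic_iff_alt_seq_even_palindrome by blast
  moreover have "int (num_tiles s) = int (sum_list a) - 1"
    using length_alt_seq[of b a] \<open>length c = length s + 2\<close> \<open>alt_seq b a = c\<close>
    by (simp add: num_tiles_def)
  ultimately have "is_snake_of_seq s a"
    unfolding is_snake_of_seq_def using sign_function_checkerboard_sign signs ed_def by blast
  then show "palindromic_even s" unfolding palindromic_even_def using pos a by blast
qed

theorem theorem3p7:
  fixes s :: "bool list"
  shows "palindromic_even s \<longleftrightarrow> rot_symmetric_at_tile s"
  by (simp add: palindromic_even_iff rot_symmetric_at_tile_iff)

end
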